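(* Consider $\dot x=f(x,u)$ with $x\in\mathbb{R}^n$, $f:\mathbb{R}^n\times\mathbb{R}^m\to\mathbb{R}^n$ continuous, $f(0,0)=0$, and suppose $V:\mathbb{R}^n\to\mathbb{R}_{\ge0}$ is a FxT-ISS Lyapunov function for this system. Let $\sigma\in\mathcal{K}_\infty$ have the form $\sigma(s)=\sum_{i=1}^nc_is^{r_i}$ with $1\le r_1<r_2<\dots<r_n$ and real $c_i\neq0$, and suppose $\sigma'(s)>0$ for all $s>0$. Then $\tilde V(x)=\sigma(V(x))$ is a FxT-ISS Lyapunov function for the system.
   Context: $\mathcal{K}_\infty$: continuous strictly increasing unbounded $\alpha:\mathbb{R}_{\ge0}\to\mathbb{R}_{\ge0}$ with $\alpha(0)=0$. $\mathcal{K}_{\mathrm{FxT}}$: functions $c_1s^{p_1}+c_2s^{p_2}$ with $c_1,c_2>0$, $p_1\in(0,1)$, $p_2>1$. A locally Lipschitz $V:\mathbb{R}^n\to\mathbb{R}_{\ge0}$ is a FxT-ISS Lyapunov function for $\dot x=f(x,u)$ if there exist $\underline\alpha,\overline\alpha,\chi\in\mathcal{K}_\infty$ and $\Psi\in\mathcal{K}_{\mathrm{FxT}}$ such that $\underline\alpha(|x|)\le V(x)\le\overline\alpha(|x|)$ for all $x$, and for all $x\in\mathbb{R}^n$, $u\in\mathbb{R}^m$: $V(x)\ge\chi(|u|)\implies DV(x;f(x,u))\le-\Psi(V(x))$, where $DV(x;v)=\limsup_{h\to0^+}\frac{V(x+hv)-V(x)}{h}$. *)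

theory Defs
  imports "HOL-Analysis.Analysis"
begin

definition class_K_inf :: "(real \<Rightarrow> real) \<Rightarrow> bool" where
  "class_K_inf \<alpha> \<longleftrightarrow> continuous_on {0..} \<alpha> \<and> strict_mono_on {0..} \<alpha> \<and> \<alpha> 0 = 0
     \<and> (\<forall>M. \<exists>s\<ge>0. M < \<alpha> s)"

definition class_K_FxT :: "(real \<Rightarrow> real) \<Rightarrow> bool" where
  "class_K_FxT \<Psi> \<longleftrightarrow> (\<exists>c1 c2 p1 p2. c1 > 0 \<and> c2 > 0 \<and> 0 < p1 \<and> p1 < 1 \<and> p2 > 1 \<and>
     \<Psi> = (\<lambda>s. c1 * s powr p1 + c2 * s powr p2))"

definition locally_lipschitz :: "('a::metric_space \<Rightarrow> 'b::metric_space) \<Rightarrow> bool" where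
  "locally_lipschitz V \<longleftrightarrow> (\<forall>x. \<exists>U. open U \<and> x \<in> U \<and> (\<exists>L. L-lipschitz_on U V))"

definition dini_deriv :: "('a::real_vector \<Rightarrow> real) \<Rightarrow> 'a \<Rightarrow> 'a \<Rightarrow> ereal" where
  "dini_deriv V x v = Limsup (at_right 0) (\<lambda>h. ereal ((V (x + h *\<^sub>R v) - V x) / h))"

definition FxT_ISS_Lyapunov ::
  "('a::real_normed_vector \<Rightarrow> 'b::real_normed_vector \<Rightarrow> 'a) \<Rightarrow> ('a \<Rightarrow> real) \<Rightarrow> bool" where
  "FxT_ISS_Lyapunov f V \<longleftrightarrow> locally_lipschitz V \<and> (\<forall>x. V x \<ge> 0) \<and>
     (\<exists>\<alpha>l \<alpha>u gain \<Psi>. class_K_inf \<alpha>l \<and> class_K_inf \<alpha>u \<and> class_K_inf gain \<and> class_K_FxT \<Psi> \<and>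
        (\<forall>x. \<alpha>l (norm x) \<le> V x \<and> V x \<le> \<alpha>u (norm x)) \<and>
        (\<forall>x u. V x \<ge> gain (norm u) \<longrightarrow> dini_deriv V x (f x u) \<le> ereal (- \<Psi> (V x))))"

end

theory Submission
  imports Defs
begin

(* Where V x > 0, the Caratheodory form of the chain rule bounds the Dini derivative of
   sigma o V by sigma'(V x) times that of V, hence by -sigma'(V x) Psi(V x); where V x = 0 is
   the minimum of V, the Lipschitz bound sigma s <= K s gives the bound 0. So it suffices to
   find Psi' of class K_FxT with Psi'(sigma s) <= sigma'(s) Psi(s). Near 0 the lowest power
   dominates, sigma s = O(s^r_1) and sigma' s >= m s^(r_1 - 1); near infinity the highest one
   does, with r_n in place of r_1. Hence Psi'(t) = e (t^q1 + t^q2) with r_1 q1 = r_1 - 1 + p1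
   and r_n q2 = r_n - 1 + p2 works for small e > 0. The comparison functions of V are simply
   composed with sigma. *)

section \<open>Composing a Lyapunov function with a class K-infinity function\<close>

lemma Limsup_mult_tendsto_pos_le:
  fixes g q :: "'a \<Rightarrow> real"
  assumes g: "(g \<longlongrightarrow> D) F" and D: "D > 0"
    and q: "Limsup F (\<lambda>h. ereal (q h)) \<le> ereal L"
  shows "Limsup F (\<lambda>h. ereal (g h * q h)) \<le> ereal (D * L)"
proof -
  define B where "B \<delta> = D * (L + \<delta>) + \<delta> * \<bar>L + \<delta>\<bar>" for \<delta>
  have bound: "Limsup F (\<lambda>h. ereal (g h * q h)) \<le> ereal (B \<delta>)" if \<delta>: "0 < \<delta>" "\<delta> < D" for \<delta>
  proof (rule Limsup_bounded)
    have "Limsup F (\<lambda>h. ereal (q h)) < ereal (L + \<delta>)"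
      using q \<delta> by (simp add: order_le_less_trans)
    then have "eventually (\<lambda>h. q h < L + \<delta>) F"
      by (auto dest: Limsup_lessD)
    moreover have "eventually (\<lambda>h. \<bar>g h - D\<bar> < \<delta>) F"
      using tendstoD[OF g \<delta>(1)] by (simp add: dist_real_def)
    ultimately show "eventually (\<lambda>h. ereal (g h * q h) \<le> ereal (B \<delta>)) F"
    proof eventually_elim
      case (elim h)
      have "g h * q h \<le> g h * (L + \<delta>)"
        using elim \<delta> by (intro mult_left_mono) auto
      also have "\<dots> = D * (L + \<delta>) + (g h - D) * (L + \<delta>)"
        by (simp add: algebra_simps)
      also have "(g h - D) * (L + \<delta>) \<le> \<bar>g h - D\<bar> * \<bar>L + \<delta>\<bar>"
        by (metis abs_ge_self abs_mult)
      also have "\<dots> \<le> \<delta> * \<bar>L + \<delta>\<bar>"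
        using elim by (intro mult_right_mono) auto
      finally show ?case by (simp add: B_def)
    qed
  qed
  have "((\<lambda>\<delta>. ereal (B \<delta>)) \<longlongrightarrow> ereal (B 0)) (at_right 0)"
    unfolding B_def by (intro tendsto_intros)
  moreover have "eventually (\<lambda>\<delta>. Limsup F (\<lambda>h. ereal (g h * q h)) \<le> ereal (B \<delta>)) (at_right 0)"
    using D by (intro eventually_at_rightI[of 0 D] bound) auto
  ultimately show ?thesis
    by (intro tendsto_lowerbound) (auto simp: B_def)
qed

lemma dini_deriv_comp_le:
  fixes V :: "'a::real_normed_vector \<Rightarrow> real"
  assumes V_cont: "((\<lambda>h. V (x + h *\<^sub>R v)) \<longlongrightarrow> V x) (at_right 0)"
    and \<sigma>: "DERIV \<sigma> (V x) :> D" and D: "D > 0"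
    and V_dini: "dini_deriv V x v \<le> ereal L"
  shows "dini_deriv (\<lambda>y. \<sigma> (V y)) x v \<le> ereal (D * L)"
proof -
  obtain g where g: "\<And>z. \<sigma> z - \<sigma> (V x) = g z * (z - V x)" "isCont g (V x)" "g (V x) = D"
    using CARAT_DERIV \<sigma> by blast
  have "((\<lambda>h. g (V (x + h *\<^sub>R v))) \<longlongrightarrow> D) (at_right 0)"
    using isCont_tendsto_compose[OF g(2) V_cont] g(3) by simp
  from Limsup_mult_tendsto_pos_le[OF this D V_dini[unfolded dini_deriv_def]]
  show ?thesis
    unfolding dini_deriv_def g(1) by simp
qed

lemma dini_deriv_le_scaled:
  assumes K: "K \<ge> 0"
    and le: "eventually (\<lambda>h. W (x + h *\<^sub>R v) - W x \<le> K * (V (x + h *\<^sub>R v) - V x)) (at_right 0)"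
  shows "dini_deriv W x v \<le> ereal K * dini_deriv V x v"
proof -
  have "eventually (\<lambda>h. ereal ((W (x + h *\<^sub>R v) - W x) / h)
      \<le> ereal K * ereal ((V (x + h *\<^sub>R v) - V x) / h)) (at_right 0)"
    using le eventually_at_right_less[of 0]
    by eventually_elim (simp add: divide_right_mono)
  then have "dini_deriv W x v
      \<le> Limsup (at_right 0) (\<lambda>h. ereal K * ereal ((V (x + h *\<^sub>R v) - V x) / h))"
    unfolding dini_deriv_def by (rule Limsup_mono)
  also have "\<dots> = ereal K * dini_deriv V x v"
    unfolding dini_deriv_def by (rule Limsup_ereal_mult_left) (auto simp: K)
  finally show ?thesis .
qed

lemma locally_lipschitz_isCont: "locally_lipschitz V \<Longrightarrow> isCont V x"
  unfolding locally_lipschitz_def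
  by (meson continuous_on_eq_continuous_at lipschitz_on_continuous_on)

lemma locally_lipschitz_comp:
  fixes V :: "'a::metric_space \<Rightarrow> real"
  assumes V: "locally_lipschitz V" and V_nonneg: "\<And>x. V x \<ge> 0"
    and \<sigma>: "\<And>M. M > 0 \<Longrightarrow> \<exists>K. K-lipschitz_on {0..M} \<sigma>"
  shows "locally_lipschitz (\<lambda>x. \<sigma> (V x))"
  unfolding locally_lipschitz_def
proof
  fix x
  obtain U L where U: "open U" "x \<in> U" "L-lipschitz_on U V"
    using V unfolding locally_lipschitz_def by blast
  define U' where "U' = U \<inter> ball x 1"
  have U': "open U'" "x \<in> U'" "L-lipschitz_on U' V"
    using U by (auto simp: U'_def intro: lipschitz_on_subset)
  obtain K where K: "K-lipschitz_on {0..V x + L + 1} \<sigma>"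
    using \<sigma>[of "V x + L + 1"] V_nonneg[of x] lipschitz_on_nonneg[OF U(3)] by auto
  have "V ` U' \<subseteq> {0..V x + L + 1}"
  proof
    fix z assume "z \<in> V ` U'"
    then obtain y where y: "y \<in> U'" "z = V y" by blast
    have "dist (V y) (V x) \<le> L * dist y x"
      using lipschitz_onD[OF U'(3) y(1) U'(2)] .
    also have "\<dots> \<le> L"
      using y(1) lipschitz_on_nonneg[OF U(3)] by (intro mult_left_le) (auto simp: U'_def dist_commute)
    finally show "z \<in> {0..V x + L + 1}"
      using y V_nonneg[of y] by (auto simp: dist_real_def)
  qed
  then have "(K * L)-lipschitz_on U' (\<lambda>y. \<sigma> (V y))"
    using K U'(3) by (intro lipschitz_on_compose2) (auto intro: lipschitz_on_subset)
  with U' show "\<exists>U. open U \<and> x \<in> U \<and> (\<exists>L. L-lipschitz_on U (\<lambda>x. \<sigma> (V x)))"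
    by blast
qed

lemma class_K_inf_le_iff:
  "class_K_inf \<alpha> \<Longrightarrow> 0 \<le> s \<Longrightarrow> 0 \<le> t \<Longrightarrow> \<alpha> s \<le> \<alpha> t \<longleftrightarrow> s \<le> t"
  unfolding class_K_inf_def by (auto simp: strict_mono_on_less_eq)

lemma class_K_inf_nonneg: "class_K_inf \<alpha> \<Longrightarrow> 0 \<le> s \<Longrightarrow> 0 \<le> \<alpha> s"
  using class_K_inf_le_iff[of \<alpha> 0 s] unfolding class_K_inf_def by simp

lemma class_K_inf_comp:
  assumes \<sigma>: "class_K_inf \<sigma>" and \<alpha>: "class_K_inf \<alpha>"
  shows "class_K_inf (\<lambda>s. \<sigma> (\<alpha> s))"
proof -
  have "continuous_on {0..} (\<lambda>s. \<sigma> (\<alpha> s))"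
    using \<sigma> \<alpha> class_K_inf_nonneg[OF \<alpha>] unfolding class_K_inf_def
    by (auto intro: continuous_on_compose2)
  moreover have "strict_mono_on {0..} (\<lambda>s. \<sigma> (\<alpha> s))"
    using \<sigma> \<alpha> class_K_inf_nonneg[OF \<alpha>] unfolding class_K_inf_def
    by (auto simp: strict_mono_on_def)
  moreover have "\<exists>s\<ge>0. M < \<sigma> (\<alpha> s)" for M
  proof -
    obtain t where t: "t \<ge> 0" "M < \<sigma> t"
      using \<sigma> unfolding class_K_inf_def by blast
    obtain s where s: "s \<ge> 0" "t < \<alpha> s"
      using \<alpha> unfolding class_K_inf_def by blast
    have "\<sigma> t \<le> \<sigma> (\<alpha> s)"
      using class_K_inf_le_iff[OF \<sigma>] class_K_inf_nonneg[OF \<alpha>] t s by simp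
    with t s show ?thesis by force
  qed
  ultimately show ?thesis
    using \<sigma> \<alpha> unfolding class_K_inf_def by simp
qed

lemma dini_deriv_comp_decay:
  fixes V :: "'a::real_normed_vector \<Rightarrow> real"
  assumes V_cont: "isCont V x" and V_nonneg: "\<And>y. V y \<ge> 0"
    and \<sigma>_zero: "\<sigma> 0 = 0" and \<sigma>_lip: "K-lipschitz_on {0..1} \<sigma>"
    and \<sigma>_deriv: "\<And>s. s > 0 \<Longrightarrow> DERIV \<sigma> s :> \<sigma>' s" and \<sigma>'_pos: "\<And>s. s > 0 \<Longrightarrow> \<sigma>' s > 0"
    and rate: "\<And>s. s > 0 \<Longrightarrow> \<Psi>' (\<sigma> s) \<le> \<sigma>' s * \<Psi> s"
    and \<Psi>_zero: "\<Psi> 0 = 0" and \<Psi>'_zero: "\<Psi>' 0 = 0"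
    and V_dini: "dini_deriv V x v \<le> ereal (- \<Psi> (V x))"
  shows "dini_deriv (\<lambda>y. \<sigma> (V y)) x v \<le> ereal (- \<Psi>' (\<sigma> (V x)))"
proof -
  have "((\<lambda>h::real. x + h *\<^sub>R v) \<longlongrightarrow> x) (at_right 0)"
    by (auto intro!: tendsto_eq_intros)
  then have V_ray: "((\<lambda>h. V (x + h *\<^sub>R v)) \<longlongrightarrow> V x) (at_right 0)"
    by (rule isCont_tendsto_compose[OF V_cont])
  show ?thesis
  proof (cases "V x > 0")
    case True
    have "dini_deriv (\<lambda>y. \<sigma> (V y)) x v \<le> ereal (\<sigma>' (V x) * - \<Psi> (V x))"
      by (rule dini_deriv_comp_le[OF V_ray \<sigma>_deriv[OF True] \<sigma>'_pos[OF True] V_dini])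
    also have "\<dots> \<le> ereal (- \<Psi>' (\<sigma> (V x)))"
      using rate[OF True] by simp
    finally show ?thesis .
  next
    case False
    then have Vx: "V x = 0"
      using V_nonneg[of x] by simp
    \<comment> \<open>\<open>\<sigma>\<close> need not be differentiable at 0; as V attains its minimum 0 at x,
      the Lipschitz bound \<open>\<sigma> s \<le> K * s\<close> suffices.\<close>
    have "eventually (\<lambda>h. V (x + h *\<^sub>R v) \<le> 1) (at_right 0)"
      using tendstoD[OF V_ray zero_less_one] by (rule eventually_mono) (auto simp: Vx dist_real_def)
    then have "eventually (\<lambda>h. \<sigma> (V (x + h *\<^sub>R v)) - \<sigma> (V x)
        \<le> K * (V (x + h *\<^sub>R v) - V x)) (at_right 0)"
    proof eventually_elim
      case (elim h)
      then show ?case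
        using lipschitz_onD[OF \<sigma>_lip, of "V (x + h *\<^sub>R v)" 0] V_nonneg[of "x + h *\<^sub>R v"]
        by (auto simp: Vx \<sigma>_zero dist_real_def)
    qed
    then have "dini_deriv (\<lambda>y. \<sigma> (V y)) x v \<le> ereal K * dini_deriv V x v"
      by (rule dini_deriv_le_scaled[OF lipschitz_on_nonneg[OF \<sigma>_lip]])
    also have "\<dots> \<le> ereal K * 0"
      using V_dini lipschitz_on_nonneg[OF \<sigma>_lip]
      by (intro ereal_mult_left_mono) (auto simp: Vx \<Psi>_zero zero_ereal_def)
    finally show ?thesis
      by (simp add: Vx \<sigma>_zero \<Psi>'_zero zero_ereal_def)
  qed
qed

theorem FxT_ISS_Lyapunov_comp:
  fixes f :: "'a::real_normed_vector \<Rightarrow> 'b::real_normed_vector \<Rightarrow> 'a"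
  assumes V: "FxT_ISS_Lyapunov f V" and \<sigma>: "class_K_inf \<sigma>"
    and \<sigma>_lip: "\<And>M. M > 0 \<Longrightarrow> \<exists>K. K-lipschitz_on {0..M} \<sigma>"
    and \<sigma>_deriv: "\<And>s. s > 0 \<Longrightarrow> DERIV \<sigma> s :> \<sigma>' s" and \<sigma>'_pos: "\<And>s. s > 0 \<Longrightarrow> \<sigma>' s > 0"
    and \<sigma>_rate: "\<And>\<Psi>. class_K_FxT \<Psi> \<Longrightarrow>
      \<exists>\<Psi>'. class_K_FxT \<Psi>' \<and> (\<forall>s>0. \<Psi>' (\<sigma> s) \<le> \<sigma>' s * \<Psi> s)"
  shows "FxT_ISS_Lyapunov f (\<lambda>x. \<sigma> (V x))"
proof -
  obtain \<alpha>l \<alpha>u gain \<Psi> where V_lip: "locally_lipschitz V" and V_nonneg: "\<And>x. V x \<ge> 0"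
    and K: "class_K_inf \<alpha>l" "class_K_inf \<alpha>u" "class_K_inf gain" and \<Psi>: "class_K_FxT \<Psi>"
    and V_bounds: "\<And>x. \<alpha>l (norm x) \<le> V x \<and> V x \<le> \<alpha>u (norm x)"
    and V_decay: "\<And>x u. V x \<ge> gain (norm u) \<Longrightarrow> dini_deriv V x (f x u) \<le> ereal (- \<Psi> (V x))"
    using V unfolding FxT_ISS_Lyapunov_def by blast
  obtain \<Psi>' where \<Psi>': "class_K_FxT \<Psi>'" and rate: "\<And>s. s > 0 \<Longrightarrow> \<Psi>' (\<sigma> s) \<le> \<sigma>' s * \<Psi> s"
    using \<sigma>_rate[OF \<Psi>] by blast
  obtain K where \<sigma>_lip1: "K-lipschitz_on {0..1} \<sigma>"
    using \<sigma>_lip[of 1] by auto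
  have decay: "dini_deriv (\<lambda>x. \<sigma> (V x)) x (f x u) \<le> ereal (- \<Psi>' (\<sigma> (V x)))"
    if "\<sigma> (gain (norm u)) \<le> \<sigma> (V x)" for x u
  proof (rule dini_deriv_comp_decay[OF locally_lipschitz_isCont[OF V_lip] V_nonneg _ \<sigma>_lip1
        \<sigma>_deriv \<sigma>'_pos rate])
    show "dini_deriv V x (f x u) \<le> ereal (- \<Psi> (V x))"
      using that V_decay class_K_inf_le_iff[OF \<sigma>] class_K_inf_nonneg[OF K(3)] V_nonneg by simp
  qed (use \<sigma> \<Psi> \<Psi>' in \<open>auto simp: class_K_inf_def class_K_FxT_def\<close>)
  show ?thesis
    unfolding FxT_ISS_Lyapunov_def
  proof (intro conjI exI allI impI)
    show "locally_lipschitz (\<lambda>x. \<sigma> (V x))"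
      by (rule locally_lipschitz_comp[OF V_lip V_nonneg \<sigma>_lip])
    show "class_K_inf (\<lambda>s. \<sigma> (\<alpha>l s))" "class_K_inf (\<lambda>s. \<sigma> (\<alpha>u s))" "class_K_inf (\<lambda>s. \<sigma> (gain s))"
      using class_K_inf_comp[OF \<sigma>] K by auto
    show "\<sigma> (\<alpha>l (norm x)) \<le> \<sigma> (V x)" "\<sigma> (V x) \<le> \<sigma> (\<alpha>u (norm x))" for x
      using V_bounds[of x] class_K_inf_le_iff[OF \<sigma>] class_K_inf_nonneg K V_nonneg by auto
  qed (use \<sigma> V_nonneg class_K_inf_nonneg \<Psi>' decay in auto)
qed

section \<open>Fixed-time decay rates\<close>

lemma powr_le_of_le_mult_powr:
  fixes S C s a q E :: real
  assumes S: "0 \<le> S" "S \<le> C * s powr a" and C: "0 \<le> C" and q: "0 \<le> q"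
    and E: "s powr (a * q) \<le> s powr E"
  shows "S powr q \<le> C powr q * s powr E"
proof -
  have "S powr q \<le> (C * s powr a) powr q"
    using S q by (intro powr_mono2) auto
  also have "\<dots> = C powr q * s powr (a * q)"
    using C by (simp add: powr_mult powr_powr)
  also have "\<dots> \<le> C powr q * s powr E"
    using E by (intro mult_left_mono) auto
  finally show ?thesis .
qed

lemma FxT_rate_bound:
  fixes S D P s C a p q1 q2 e m c :: real
  assumes S: "0 \<le> S" "S \<le> C * s powr a" and C: "0 \<le> C" and q: "0 < q1" "0 < q2"
    and E: "s powr (a * q1) \<le> s powr (a - 1 + p)" "s powr (a * q2) \<le> s powr (a - 1 + p)"
    and e: "0 \<le> e" "e * (C powr q1 + C powr q2) \<le> m * c" and c: "0 \<le> c"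
    and D: "0 \<le> m" "m * s powr (a - 1) \<le> D" and P: "c * s powr p \<le> P"
  shows "e * S powr q1 + e * S powr q2 \<le> D * P"
proof -
  have "e * S powr q1 + e * S powr q2
      \<le> e * (C powr q1 * s powr (a - 1 + p)) + e * (C powr q2 * s powr (a - 1 + p))"
    using S C q E e(1) by (intro add_mono mult_left_mono powr_le_of_le_mult_powr) auto
  also have "\<dots> = e * (C powr q1 + C powr q2) * s powr (a - 1 + p)"
    by (simp add: algebra_simps)
  also have "\<dots> \<le> m * c * s powr (a - 1 + p)"
    using e by (intro mult_right_mono) auto
  also have "\<dots> = (m * s powr (a - 1)) * (c * s powr p)"
    by (simp add: powr_add)
  also have "\<dots> \<le> D * P"
    using D c P by (intro mult_mono order_trans[OF _ D(2)]) auto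
  finally show ?thesis .
qed

lemma class_K_FxT_rate_of_power_bounds:
  fixes \<sigma> \<sigma>' \<Psi> :: "real \<Rightarrow> real"
  assumes \<Psi>: "class_K_FxT \<Psi>" and a: "a \<ge> 1" and b: "b \<ge> 1" and C: "C \<ge> 0"
    and m: "m1 > 0" "m2 > 0"
    and \<sigma>_nonneg: "\<And>s. s > 0 \<Longrightarrow> 0 \<le> \<sigma> s"
    and \<sigma>_le_at_0: "\<And>s. 0 < s \<Longrightarrow> s \<le> 1 \<Longrightarrow> \<sigma> s \<le> C * s powr a"
    and \<sigma>_le_at_top: "\<And>s. 1 \<le> s \<Longrightarrow> \<sigma> s \<le> C * s powr b"
    and \<sigma>'_ge_at_0: "\<And>s. 0 < s \<Longrightarrow> s \<le> 1 \<Longrightarrow> m1 * s powr (a - 1) \<le> \<sigma>' s"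
    and \<sigma>'_ge_at_top: "\<And>s. 1 \<le> s \<Longrightarrow> m2 * s powr (b - 1) \<le> \<sigma>' s"
  shows "\<exists>\<Psi>'. class_K_FxT \<Psi>' \<and> (\<forall>s>0. \<Psi>' (\<sigma> s) \<le> \<sigma>' s * \<Psi> s)"
proof -
  obtain c1 c2 p1 p2 where c: "c1 > 0" "c2 > 0" and p: "0 < p1" "p1 < 1" "p2 > 1"
    and \<Psi>_eq: "\<Psi> = (\<lambda>s. c1 * s powr p1 + c2 * s powr p2)"
    using \<Psi> unfolding class_K_FxT_def by blast
  \<comment> \<open>The exponents are chosen so that \<open>\<sigma> s powr q1\<close> matches \<open>\<sigma>' s * s powr p1\<close> near 0
    and \<open>\<sigma> s powr q2\<close> matches \<open>\<sigma>' s * s powr p2\<close> near infinity.\<close>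
  define q1 where "q1 = (a - 1 + p1) / a"
  define q2 where "q2 = (b - 1 + p2) / b"
  have q1: "a * q1 = a - 1 + p1" "0 < q1" "q1 < 1"
    using a p by (auto simp: q1_def field_simps)
  have q2: "b * q2 = b - 1 + p2" "q2 > 1"
    using b p by (auto simp: q2_def field_simps)
  define K where "K = C powr q1 + C powr q2"
  define e where "e = min (m1 * c1) (m2 * c2) / (K + 1)"
  have "K \<ge> 0"
    by (simp add: K_def)
  then have e_pos: "e > 0" and "e * (K + 1) = min (m1 * c1) (m2 * c2)"
    using m c by (simp_all add: e_def)
  then have "e * K \<le> min (m1 * c1) (m2 * c2)"
    unfolding distrib_left by linarith
  then have e: "e > 0" "e * (C powr q1 + C powr q2) \<le> m1 * c1" "e * (C powr q1 + C powr q2) \<le> m2 * c2"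
    using e_pos by (auto simp: K_def)
  define \<Psi>' where "\<Psi>' t = e * t powr q1 + e * t powr q2" for t
  have "\<Psi>' (\<sigma> s) \<le> \<sigma>' s * \<Psi> s" if s: "s > 0" for s
  proof (cases "s \<le> 1")
    case True
    show ?thesis
      unfolding \<Psi>'_def \<Psi>_eq
    proof (rule FxT_rate_bound[where c = c1 and p = p1, OF \<sigma>_nonneg[OF s] \<sigma>_le_at_0[OF s True] C
          _ _ _ _ _ _ _ _ \<sigma>'_ge_at_0[OF s True]])
      have "a \<le> a * q2"
        using a q2 by (simp add: mult_le_cancel_left1)
      then show "s powr (a * q2) \<le> s powr (a - 1 + p1)"
        using True s p by (intro powr_mono') auto
    qed (use s p q1 q2 e c m in auto)
  next
    case False
    show ?thesis
      unfolding \<Psi>'_def \<Psi>_eq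
    proof (rule FxT_rate_bound[where c = c2 and p = p2, OF \<sigma>_nonneg[OF s] \<sigma>_le_at_top C
          _ _ _ _ _ _ _ _ \<sigma>'_ge_at_top])
      have "b * q1 \<le> b"
        using b q1 by (intro mult_left_le) auto
      then show "s powr (b * q1) \<le> s powr (b - 1 + p2)"
        using False p by (intro powr_mono) auto
    qed (use False s p q1 q2 e c m in auto)
  qed
  moreover have "class_K_FxT \<Psi>'"
    unfolding class_K_FxT_def \<Psi>'_def using e q1 q2 by blast
  ultimately show ?thesis
    by blast
qed

section \<open>Sums of real powers\<close>

lemma DERIV_bounded_lipschitz_on_Icc:
  fixes f f' :: "real \<Rightarrow> real"
  assumes ab: "a < b" and f_cont: "continuous_on {a..b} f"
    and f_deriv: "\<And>x. a < x \<Longrightarrow> x \<le> b \<Longrightarrow> DERIV f x :> f' x"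
    and f'_bound: "\<And>x. a < x \<Longrightarrow> x \<le> b \<Longrightarrow> \<bar>f' x\<bar> \<le> K"
  shows "K-lipschitz_on {a..b} f"
proof -
  have "K-lipschitz_on {a<..b} f"
  proof (rule bounded_derivative_imp_lipschitz[where f' = "\<lambda>x h. f' x * h"])
    show "(f has_derivative (\<lambda>h. f' x * h)) (at x within {a<..b})" if "x \<in> {a<..b}" for x
    proof -
      have "(f has_field_derivative f' x) (at x within {a<..b})"
        using f_deriv that by (auto intro: has_field_derivative_at_within)
      then show ?thesis
        by (rule has_field_derivative_imp_has_derivative)
    qed
    show "onorm (\<lambda>h. f' x * h) \<le> K" if "x \<in> {a<..b}" for x
    proof (rule onorm_le)
      show "norm (f' x * h) \<le> K * norm h" for h
        using f'_bound[of x] that by (simp add: abs_mult mult_right_mono)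
    qed
    show "0 \<le> K"
      using f'_bound[of b] ab by (meson abs_ge_zero order_trans order_refl)
  qed (rule convex_real_interval)
  then show ?thesis
    using lipschitz_on_closure[of K "{a<..b}" f] f_cont ab by simp
qed

lemma DERIV_powr_sum:
  fixes s :: real and c r :: "'i \<Rightarrow> real"
  assumes "s > 0"
  shows "DERIV (\<lambda>s. \<Sum>i\<in>A. c i * s powr r i) s :> (\<Sum>i\<in>A. c i * r i * s powr (r i - 1))"
proof -
  have "DERIV (\<lambda>s. c i * s powr r i) s :> c i * (r i * s powr (r i - 1))" for i
    using has_real_derivative_powr[OF assms, of "r i"] by (rule DERIV_cmult)
  then show ?thesis
    by (auto intro: DERIV_sum simp: mult.assoc)
qed

lemma continuous_on_Icc_pos_lower_bound:
  fixes e :: "real \<Rightarrow> real"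
  assumes ab: "a < b" and e_cont: "continuous_on {a..b} e"
    and e_pos: "\<And>t. a < t \<Longrightarrow> t \<le> b \<Longrightarrow> e t > 0" and e_a: "e a \<noteq> 0"
  shows "\<exists>m>0. \<forall>t\<in>{a..b}. m \<le> e t"
proof -
  have "(e \<longlongrightarrow> e a) (at a within {a..b})"
    using e_cont ab by (auto simp: continuous_on_def)
  then have "(e \<longlongrightarrow> e a) (at_right a)"
    by (simp add: at_within_Icc_at_right[OF ab])
  moreover have "eventually (\<lambda>t. 0 \<le> e t) (at_right a)"
    using ab by (intro eventually_at_rightI[of a b]) (auto intro: less_imp_le e_pos)
  ultimately have "0 \<le> e a"
    by (rule tendsto_lowerbound) simp
  with e_a e_pos have pos: "e t > 0" if "t \<in> {a..b}" for t
    using that by (cases "t = a") auto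
  obtain t where "t \<in> {a..b}" "\<forall>y\<in>{a..b}. e t \<le> e y"
    using continuous_attains_inf[OF compact_Icc _ e_cont] ab by auto
  with pos show ?thesis
    by blast
qed

lemma powr_sum_ge_lowest_power:
  fixes d k :: "'i \<Rightarrow> real"
  assumes A: "finite A" "j \<in> A" and d: "d j \<noteq> 0" and k: "\<And>i. i \<in> A \<Longrightarrow> i \<noteq> j \<Longrightarrow> k j < k i"
    and pos: "\<And>s. 0 < s \<Longrightarrow> s \<le> 1 \<Longrightarrow> (\<Sum>i\<in>A. d i * s powr k i) > 0"
  shows "\<exists>m>0. \<forall>s. 0 < s \<longrightarrow> s \<le> 1 \<longrightarrow> m * s powr k j \<le> (\<Sum>i\<in>A. d i * s powr k i)"
proof -
  \<comment> \<open>Dividing by the lowest power leaves a function that extends continuously to 0.\<close>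
  define e where "e t = d j + (\<Sum>i\<in>A - {j}. d i * t powr (k i - k j))" for t
  have factor: "(\<Sum>i\<in>A. d i * s powr k i) = e s * s powr k j" if "s > 0" for s
  proof -
    have "(\<Sum>i\<in>A. d i * s powr k i) = d j * s powr k j + (\<Sum>i\<in>A - {j}. d i * s powr k i)"
      using A by (simp add: sum.remove)
    also have "(\<Sum>i\<in>A - {j}. d i * s powr k i) = (\<Sum>i\<in>A - {j}. d i * s powr (k i - k j)) * s powr k j"
      using that by (simp add: sum_distrib_right mult.assoc flip: powr_add)
    finally show ?thesis
      by (simp add: e_def distrib_right)
  qed
  have "continuous_on {0..1} e"
    unfolding e_def
  proof (intro continuous_on_add continuous_on_const continuous_on_sum continuous_on_mult)
    fix i assume "i \<in> A - {j}"
    then have "k i - k j > 0"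
      using k by simp
    then show "continuous_on {0..1} (\<lambda>t. t powr (k i - k j))"
      by (intro continuous_on_powr') (auto intro: continuous_on_id)
  qed
  moreover have "e t > 0" if "0 < t" "t \<le> 1" for t
    using pos[OF that] factor[of t] that by (simp add: zero_less_mult_iff)
  moreover have "e 0 \<noteq> 0"
    using d by (simp add: e_def)
  ultimately obtain m where "m > 0" "\<forall>t\<in>{0..1}. m \<le> e t"
    using continuous_on_Icc_pos_lower_bound[of 0 1 e] by auto
  then show ?thesis
    by (auto simp: factor intro!: exI[of _ m] mult_right_mono)
qed

lemma powr_sum_ge_highest_power:
  fixes d k :: "'i \<Rightarrow> real"
  assumes A: "finite A" "j \<in> A" and d: "d j \<noteq> 0" and k: "\<And>i. i \<in> A \<Longrightarrow> i \<noteq> j \<Longrightarrow> k i < k j"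
    and pos: "\<And>s. 1 \<le> s \<Longrightarrow> (\<Sum>i\<in>A. d i * s powr k i) > 0"
  shows "\<exists>m>0. \<forall>s. 1 \<le> s \<longrightarrow> m * s powr k j \<le> (\<Sum>i\<in>A. d i * s powr k i)"
proof -
  have inv: "(1 / t) powr (- a) = t powr a" if "t > 0" for t a :: real
    using that by (simp add: powr_divide powr_minus_divide)
  have "\<exists>m>0. \<forall>t. 0 < t \<longrightarrow> t \<le> 1 \<longrightarrow> m * t powr - k j \<le> (\<Sum>i\<in>A. d i * t powr - k i)"
  proof (rule powr_sum_ge_lowest_power[where d = d and k = "\<lambda>i. - k i", OF A d])
    show "(\<Sum>i\<in>A. d i * t powr - k i) > 0" if "0 < t" "t \<le> 1" for t
      using pos[of "1 / t"] that inv[of "1 / t"] by simp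
  qed (use k in auto)
  then obtain m where m: "m > 0"
    and bound: "\<And>t. 0 < t \<Longrightarrow> t \<le> 1 \<Longrightarrow> m * t powr - k j \<le> (\<Sum>i\<in>A. d i * t powr - k i)"
    by blast
  have "m * s powr k j \<le> (\<Sum>i\<in>A. d i * s powr k i)" if "1 \<le> s" for s
    using bound[of "1 / s"] that inv[of s] by simp
  with m show ?thesis
    by blast
qed

lemma powr_sum_le_abs_sum:
  fixes d k :: "'i \<Rightarrow> real"
  assumes "\<And>i. i \<in> A \<Longrightarrow> s powr k i \<le> s powr k0"
  shows "(\<Sum>i\<in>A. d i * s powr k i) \<le> (\<Sum>i\<in>A. \<bar>d i\<bar>) * s powr k0"
proof -
  have "d i * s powr k i \<le> \<bar>d i\<bar> * s powr k0" if "i \<in> A" for i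
  proof -
    have "d i * s powr k i \<le> \<bar>d i\<bar> * s powr k i"
      by (intro mult_right_mono) auto
    also have "\<dots> \<le> \<bar>d i\<bar> * s powr k0"
      using assms[OF that] by (intro mult_left_mono) auto
    finally show ?thesis .
  qed
  then show ?thesis
    by (simp add: sum_distrib_right sum_mono)
qed

lemma abs_powr_sum_le:
  fixes d k :: "'i \<Rightarrow> real"
  assumes k: "\<And>i. i \<in> A \<Longrightarrow> k i \<ge> 0" and s: "0 \<le> s" "s \<le> M"
  shows "\<bar>\<Sum>i\<in>A. d i * s powr k i\<bar> \<le> (\<Sum>i\<in>A. \<bar>d i\<bar> * M powr k i)"
proof -
  have "\<bar>\<Sum>i\<in>A. d i * s powr k i\<bar> \<le> (\<Sum>i\<in>A. \<bar>d i\<bar> * s powr k i)"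
    using sum_abs[of "\<lambda>i. d i * s powr k i" A] by (simp add: abs_mult)
  also have "\<dots> \<le> (\<Sum>i\<in>A. \<bar>d i\<bar> * M powr k i)"
    using k s by (intro sum_mono mult_left_mono powr_mono2) auto
  finally show ?thesis .
qed

lemma powr_sum_lipschitz_on:
  fixes c r :: "'i \<Rightarrow> real"
  assumes r: "\<And>i. i \<in> A \<Longrightarrow> r i \<ge> 1" and M: "M > 0"
  shows "(\<Sum>i\<in>A. \<bar>c i * r i\<bar> * M powr (r i - 1))-lipschitz_on {0..M} (\<lambda>s. \<Sum>i\<in>A. c i * s powr r i)"
proof (rule DERIV_bounded_lipschitz_on_Icc[OF M _ DERIV_powr_sum])
  show "continuous_on {0..M} (\<lambda>s. \<Sum>i\<in>A. c i * s powr r i)"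
  proof (intro continuous_on_sum continuous_on_mult continuous_on_const)
    fix i assume "i \<in> A"
    then have "r i > 0"
      using r[of i] by simp
    then show "continuous_on {0..M} (\<lambda>s. s powr r i)"
      by (intro continuous_on_powr') (auto intro: continuous_on_id)
  qed
  show "\<bar>\<Sum>i\<in>A. c i * r i * s powr (r i - 1)\<bar> \<le> (\<Sum>i\<in>A. \<bar>c i * r i\<bar> * M powr (r i - 1))"
    if "0 < s" "s \<le> M" for s
    using r that by (intro abs_powr_sum_le) auto
qed

context
  fixes N :: nat and c r :: "nat \<Rightarrow> real"
  assumes N: "N > 0" and r_first: "r 0 \<ge> 1" and r_incr: "\<And>i j. i < j \<Longrightarrow> j < N \<Longrightarrow> r i < r j"
    and c_nz: "\<And>i. i < N \<Longrightarrow> c i \<noteq> 0"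
begin

lemma exponents_between_first_last:
  assumes "i < N"
  shows "r 0 \<le> r i \<and> r i \<le> r (N - 1)"
proof
  show "r 0 \<le> r i"
    using r_incr[of 0 i] assms by (cases "i = 0") auto
  have "i = N - 1 \<or> i < N - 1"
    using assms by linarith
  then show "r i \<le> r (N - 1)"
    using r_incr[of i "N - 1"] N by auto
qed

lemma powr_sum_lipschitz_on_Icc: "M > 0 \<Longrightarrow> \<exists>K. K-lipschitz_on {0..M} (\<lambda>s. \<Sum>i<N. c i * s powr r i)"
  using powr_sum_lipschitz_on[of "{..<N}" r M c] exponents_between_first_last r_first by force

lemma powr_sum_rate:
  assumes \<Psi>: "class_K_FxT \<Psi>"
    and \<sigma>_nonneg: "\<And>s. s > 0 \<Longrightarrow> 0 \<le> (\<Sum>i<N. c i * s powr r i)"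
    and \<sigma>'_pos: "\<And>s. s > 0 \<Longrightarrow> 0 < (\<Sum>i<N. c i * r i * s powr (r i - 1))"
  shows "\<exists>\<Psi>'. class_K_FxT \<Psi>' \<and>
    (\<forall>s>0. \<Psi>' (\<Sum>i<N. c i * s powr r i) \<le> (\<Sum>i<N. c i * r i * s powr (r i - 1)) * \<Psi> s)"
proof -
  have r_ge_1: "r i \<ge> 1" if "i < N" for i
    using exponents_between_first_last[OF that] r_first by simp
  have "\<exists>m>0. \<forall>s. 0 < s \<longrightarrow> s \<le> 1 \<longrightarrow>
      m * s powr (r 0 - 1) \<le> (\<Sum>i<N. c i * r i * s powr (r i - 1))"
    using N c_nz r_ge_1 r_incr \<sigma>'_pos
    by (intro powr_sum_ge_lowest_power[where d = "\<lambda>i. c i * r i" and k = "\<lambda>i. r i - 1"]) force+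
  then obtain m1 where m1: "m1 > 0" "\<And>s. 0 < s \<Longrightarrow> s \<le> 1 \<Longrightarrow>
      m1 * s powr (r 0 - 1) \<le> (\<Sum>i<N. c i * r i * s powr (r i - 1))"
    by blast
  have "\<exists>m>0. \<forall>s. 1 \<le> s \<longrightarrow>
      m * s powr (r (N - 1) - 1) \<le> (\<Sum>i<N. c i * r i * s powr (r i - 1))"
    using N c_nz r_ge_1 r_incr[of _ "N - 1"] \<sigma>'_pos
    by (intro powr_sum_ge_highest_power[where d = "\<lambda>i. c i * r i" and k = "\<lambda>i. r i - 1"]) force+
  then obtain m2 where m2: "m2 > 0" "\<And>s. 1 \<le> s \<Longrightarrow>
      m2 * s powr (r (N - 1) - 1) \<le> (\<Sum>i<N. c i * r i * s powr (r i - 1))"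
    by blast
  show ?thesis
  proof (rule class_K_FxT_rate_of_power_bounds[OF \<Psi> r_first r_ge_1 _ m1(1) m2(1) \<sigma>_nonneg _ _ m1(2) m2(2)])
    show "(\<Sum>i<N. c i * s powr r i) \<le> (\<Sum>i<N. \<bar>c i\<bar>) * s powr r 0" if "0 < s" "s \<le> 1" for s
      using that exponents_between_first_last by (intro powr_sum_le_abs_sum powr_mono') auto
    show "(\<Sum>i<N. c i * s powr r i) \<le> (\<Sum>i<N. \<bar>c i\<bar>) * s powr r (N - 1)" if "1 \<le> s" for s
      using that exponents_between_first_last by (intro powr_sum_le_abs_sum powr_mono) auto
  qed (use N in auto)
qed

end

theorem lemma7:
  fixes f :: "real ^ 'n \<Rightarrow> real ^ 'm \<Rightarrow> real ^ 'n"
    and V :: "real ^ 'n \<Rightarrow> real"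
    and N :: nat and c r :: "nat \<Rightarrow> real"
    and \<sigma> :: "real \<Rightarrow> real"
  assumes f_cont: "continuous_on UNIV (\<lambda>(x, u). f x u)"
    and f_zero: "f 0 0 = 0"
    and V_lyap: "FxT_ISS_Lyapunov f V"
    and \<sigma>_def: "\<sigma> = (\<lambda>s. \<Sum>i<N. c i * s powr r i)"
    and r_ge1: "N > 0 \<Longrightarrow> r 0 \<ge> 1"
    and r_incr: "\<And>i j. i < j \<Longrightarrow> j < N \<Longrightarrow> r i < r j"
    and c_nz: "\<And>i. i < N \<Longrightarrow> c i \<noteq> 0"
    and \<sigma>_K: "class_K_inf \<sigma>"
    and \<sigma>_deriv: "\<And>s. s > 0 \<Longrightarrow> deriv \<sigma> s > 0"
  shows "FxT_ISS_Lyapunov f (\<lambda>x. \<sigma> (V x))"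
proof -
  have N: "N > 0"
  proof (rule ccontr)
    assume "\<not> N > 0"
    then have "\<sigma> 1 = \<sigma> 0"
      by (simp add: \<sigma>_def)
    then show False
      using class_K_inf_le_iff[OF \<sigma>_K, of 1 0] by simp
  qed
  define \<sigma>' where "\<sigma>' s = (\<Sum>i<N. c i * r i * s powr (r i - 1))" for s
  have \<sigma>_has_deriv: "DERIV \<sigma> s :> \<sigma>' s" if "s > 0" for s
    unfolding \<sigma>_def \<sigma>'_def using DERIV_powr_sum[OF that] .
  have \<sigma>'_pos: "\<sigma>' s > 0" if "s > 0" for s
    using \<sigma>_deriv[OF that] DERIV_imp_deriv[OF \<sigma>_has_deriv[OF that]] by simp
  show ?thesis
  proof (rule FxT_ISS_Lyapunov_comp[OF V_lyap \<sigma>_K _ \<sigma>_has_deriv \<sigma>'_pos])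
    show "\<exists>K. K-lipschitz_on {0..M} \<sigma>" if "M > 0" for M
      unfolding \<sigma>_def
      by (rule powr_sum_lipschitz_on_Icc[where N = N and c = c and r = r,
            OF N r_ge1[OF N] r_incr c_nz that])
    show "\<exists>\<Psi>'. class_K_FxT \<Psi>' \<and> (\<forall>s>0. \<Psi>' (\<sigma> s) \<le> \<sigma>' s * \<Psi> s)"
      if "class_K_FxT \<Psi>" for \<Psi>
      using powr_sum_rate[where N = N and c = c and r = r, OF N r_ge1[OF N] r_incr c_nz that]
        class_K_inf_nonneg[OF \<sigma>_K] \<sigma>'_pos
      unfolding \<sigma>_def \<sigma>'_def by auto
  qed
qed

end
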